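(* Let $V=[\alpha_1,\beta_1]\times\dots\times[\alpha_d,\beta_d]$ be an axis-parallel box in $\mathbb{R}^d$ and let $\mathcal{G}_1,\dots,\mathcal{G}_n$ be non-empty collections of axis-parallel boxes in $\mathbb{R}^d$ such that (i) for every $i\in[n]$, every $B\in\mathcal{G}_i$ and every $j\in[d]$, $\Pi_j(B)\cap\{\alpha_j,\beta_j\}\neq\emptyset$ (so $B$ contains at least one vertex of $V$), and (ii) every colorful $n$-tuple is hit by at least one diagonally opposite pair of vertices of $V$. Let $(V_1,\dots,V_r)$, with $r<n$, be a colorful $r$-tuple such that there are at most $2^k$, with $k<d$, distinct diagonally opposite pairs of vertices of $V$ each of which hits $(V_1,\dots,V_r)$. Then at least one of the following holds: Option 1: for every diagonally opposite pair $(\lambda,\lambda')$ of vertices of $V$ hitting $(V_1,\dots,V_r)$ and every family $\mathcal{G}_i$ with $V_k\notin\mathcal{G}_i$ for all $k\in[r]$, the family $\mathcal{G}_i$ is hit by $\{\lambda,\lambda'\}$; Option 2: there exist $i\in[n]$ and $V_{r+1}\in\mathcal{G}_i$ such that $(V_1,\dots,V_r,V_{r+1})$ is a colorful tuple and there are at most $2^{k-1}$ distinct diagonally opposite pairs of vertices of $V$ each of which hits $(V_1,\dots,V_r,V_{r+1})$.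
   Context: For a box $B=[\alpha_1,\beta_1]\times\dots\times[\alpha_d,\beta_d]$, $\Pi_j(B)=[\alpha_j,\beta_j]$. A vertex of $V$ is a point $(\lambda_1,\dots,\lambda_d)$ with $\lambda_j\in\{\alpha_j,\beta_j\}$ for all $j$; vertices $\lambda,\lambda'$ are diagonally opposite if $\{\lambda_j,\lambda'_j\}=\{\alpha_j,\beta_j\}$ for all $j$. A set of points hits a tuple or family of boxes if every box contains at least one of the points. Given families $\mathcal{G}_1,\dots,\mathcal{G}_n$, a colorful $t$-tuple is $(C_1,\dots,C_t)$ with $C_j\in\mathcal{G}_{i_j}$ for pairwise distinct indices $i_1,\dots,i_t\in[n]$. *)

theory Defs
  imports "HOL-Analysis.Analysis"
begin

text \<open>Points of R^d are vectors of type real^'d (d = CARD('d)). An axis-parallel box is a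
  (non-empty) closed box cbox a b with a$j \<le> b$j for all coordinates j.\<close>

definition is_box :: "(real^'d) set \<Rightarrow> bool" where
  "is_box B \<longleftrightarrow> (\<exists>a b. (\<forall>j. a$j \<le> b$j) \<and> B = cbox a b)"

definition proj :: "'d \<Rightarrow> (real^'d) set \<Rightarrow> real set" where
  "proj j B = (\<lambda>x. x$j) ` B"

definition is_vertex :: "real^'d \<Rightarrow> real^'d \<Rightarrow> real^'d \<Rightarrow> bool" where
  "is_vertex al be l \<longleftrightarrow> (\<forall>j. l$j \<in> {al$j, be$j})"

definition diag_opp :: "real^'d \<Rightarrow> real^'d \<Rightarrow> real^'d \<Rightarrow> real^'d \<Rightarrow> bool" where
  "diag_opp al be l l' \<longleftrightarrow> is_vertex al be l \<and> is_vertex al be l' \<and>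
     (\<forall>j. {l$j, l'$j} = {al$j, be$j})"

definition diag_pairs :: "real^'d \<Rightarrow> real^'d \<Rightarrow> (real^'d) set set" where
  "diag_pairs al be = {{l, l'} | l l'. diag_opp al be l l'}"

definition hits :: "'a set \<Rightarrow> 'a set set \<Rightarrow> bool" where
  "hits P F \<longleftrightarrow> (\<forall>B\<in>F. \<exists>p\<in>P. p \<in> B)"

definition colorful :: "(nat \<Rightarrow> 'a set) \<Rightarrow> nat \<Rightarrow> 'a list \<Rightarrow> bool" where
  "colorful G n Cs \<longleftrightarrow> (\<exists>is. length is = length Cs \<and> distinct is \<and> set is \<subseteq> {1..n} \<and>
      (\<forall>j<length Cs. Cs!j \<in> G (is!j)))"

end

theory Submission
  imports Defs
begin

text \<open>Identify the vertices of V with (Z/2)^d and a diagonally opposite pair with a class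
  modulo the all-ones vector. If a box contains vertices x, y, z, it also contains x + y + z:
  in every coordinate where x and y differ the box covers the whole side of V. Hence the pairs
  hitting a family of boxes are closed under (x, y, z) \<mapsto> x + y + z. If a pair [x] hits
  (V_1, ..., V_r) but misses W, translation by x - y, for a pair [y] hitting (V_1, ..., V_r, W),
  maps the pairs hitting (V_1, ..., V_r, W) injectively to pairs hitting (V_1, ..., V_r) that miss W.
  So whenever Option 1 fails, adding W at least halves the number of hitting pairs.\<close>

definition antipode :: "real^'d \<Rightarrow> real^'d \<Rightarrow> real^'d \<Rightarrow> real^'d" where
  "antipode al be x = (\<chi> j. al$j + be$j - x$j)"

text \<open>On vertices, viewed as elements of (Z/2)^d, this is z + x - y.\<close>
definition cube_translate :: "real^'d \<Rightarrow> real^'d \<Rightarrow> real^'d \<Rightarrow> real^'d \<Rightarrow> real^'d \<Rightarrow> real^'d" where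
  "cube_translate al be x y z = (\<chi> j. if x$j = y$j then z$j else al$j + be$j - z$j)"

definition diag_pair :: "real^'d \<Rightarrow> real^'d \<Rightarrow> real^'d \<Rightarrow> (real^'d) set" where
  "diag_pair al be x = {x, antipode al be x}"

lemma is_vertex_nth: "is_vertex al be x \<Longrightarrow> x$j = al$j \<or> x$j = be$j"
  unfolding is_vertex_def by blast

lemma is_vertex_antipode:
  assumes "is_vertex al be x"
  shows "is_vertex al be (antipode al be x)"
  unfolding is_vertex_def
proof
  fix j
  from assms have "x$j = al$j \<or> x$j = be$j" by (rule is_vertex_nth)
  then show "antipode al be x $ j \<in> {al$j, be$j}" by (auto simp: antipode_def)
qed

lemma is_vertex_cube_translate:
  assumes "is_vertex al be z"
  shows "is_vertex al be (cube_translate al be x y z)"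
  unfolding is_vertex_def
proof
  fix j
  from assms have "z$j = al$j \<or> z$j = be$j" by (rule is_vertex_nth)
  then show "cube_translate al be x y z $ j \<in> {al$j, be$j}" by (auto simp: cube_translate_def)
qed

lemma finite_vertices: "finite {x::real^'d. is_vertex al be x}"
proof (rule finite_subset)
  show "{x. is_vertex al be x} \<subseteq> range (\<lambda>s::'d \<Rightarrow> bool. \<chi> j. if s j then be$j else al$j)"
  proof
    fix x :: "real^'d" assume "x \<in> {x. is_vertex al be x}"
    then have "x = (\<chi> j. if x$j = be$j then be$j else al$j)"
      unfolding is_vertex_def by (auto simp: vec_eq_iff)
    then show "x \<in> range (\<lambda>s::'d \<Rightarrow> bool. \<chi> j. if s j then be$j else al$j)"
      by (rule image_eqI[where x = "\<lambda>j. x$j = be$j"]) simp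
  qed
qed simp

lemma diag_opp_iff: "diag_opp al be l l' \<longleftrightarrow> is_vertex al be l \<and> l' = antipode al be l"
proof
  assume opp: "diag_opp al be l l'"
  then have l: "is_vertex al be l" by (simp add: diag_opp_def)
  have "l'$j = al$j + be$j - l$j" for j
  proof -
    have "{l$j, l'$j} = {al$j, be$j}" using opp unfolding diag_opp_def by blast
    moreover have "l$j = al$j \<or> l$j = be$j" using l by (rule is_vertex_nth)
    ultimately show ?thesis by (auto simp: doubleton_eq_iff)
  qed
  with l show "is_vertex al be l \<and> l' = antipode al be l"
    by (simp add: antipode_def vec_eq_iff)
next
  assume l: "is_vertex al be l \<and> l' = antipode al be l"
  have "{l$j, l'$j} = {al$j, be$j}" for j
  proof -
    have "l$j = al$j \<or> l$j = be$j" using l is_vertex_nth by blast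
    with l show ?thesis by (auto simp: antipode_def)
  qed
  with l show "diag_opp al be l l'"
    unfolding diag_opp_def using is_vertex_antipode by blast
qed

lemma diag_pairs_eq_image: "diag_pairs al be = diag_pair al be ` {x. is_vertex al be x}"
  unfolding diag_pairs_def diag_pair_def diag_opp_iff by auto

lemma finite_diag_pairs: "finite (diag_pairs al be)"
  unfolding diag_pairs_eq_image using finite_vertices by (rule finite_imageI)

lemma cube_translate_involution: "cube_translate al be x y (cube_translate al be x y z) = z"
  unfolding cube_translate_def by (simp add: vec_eq_iff)

lemma cube_translate_cancel:
  assumes "is_vertex al be x" "is_vertex al be y" "is_vertex al be z"
  shows "cube_translate al be z (cube_translate al be x y z) y = x"
  unfolding vec_eq_iff
proof
  fix j
  have "x$j = al$j \<or> x$j = be$j" "y$j = al$j \<or> y$j = be$j" "z$j = al$j \<or> z$j = be$j"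
    using assms is_vertex_nth by blast+
  then show "cube_translate al be z (cube_translate al be x y z) y $ j = x$j"
    by (auto simp: cube_translate_def)
qed

lemma cube_translate_antipode:
  "cube_translate al be x y (antipode al be z) = antipode al be (cube_translate al be x y z)"
  unfolding cube_translate_def antipode_def by (simp add: vec_eq_iff)

lemma cube_translate_antipode_left:
  assumes "is_vertex al be x" "is_vertex al be y" "is_vertex al be z"
  shows "cube_translate al be (antipode al be x) y z = antipode al be (cube_translate al be x y z)"
  unfolding vec_eq_iff
proof
  fix j
  have "x$j = al$j \<or> x$j = be$j" "y$j = al$j \<or> y$j = be$j" "z$j = al$j \<or> z$j = be$j"
    using assms is_vertex_nth by blast+
  then show "cube_translate al be (antipode al be x) y z $ j = antipode al be (cube_translate al be x y z) $ j"
    by (auto simp: cube_translate_def antipode_def)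
qed

lemma cube_translate_antipode_middle:
  assumes "is_vertex al be x" "is_vertex al be y" "is_vertex al be z"
  shows "cube_translate al be x (antipode al be y) z = antipode al be (cube_translate al be x y z)"
  unfolding vec_eq_iff
proof
  fix j
  have "x$j = al$j \<or> x$j = be$j" "y$j = al$j \<or> y$j = be$j" "z$j = al$j \<or> z$j = be$j"
    using assms is_vertex_nth by blast+
  then show "cube_translate al be x (antipode al be y) z $ j = antipode al be (cube_translate al be x y z) $ j"
    by (auto simp: cube_translate_def antipode_def)
qed

lemma cube_translate_image_diag_pair:
  "cube_translate al be x y ` diag_pair al be z = diag_pair al be (cube_translate al be x y z)"
  unfolding diag_pair_def by (simp add: cube_translate_antipode)

lemma cube_translate_mem_box:
  assumes "is_box B" "is_vertex al be x" "is_vertex al be y" "is_vertex al be z"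
    and "x \<in> B" "y \<in> B" "z \<in> B"
  shows "cube_translate al be x y z \<in> B"
proof -
  obtain a b where B: "B = cbox a b" using assms(1) unfolding is_box_def by blast
  show ?thesis
    unfolding B mem_box_cart
  proof
    fix j
    have "x$j = al$j \<or> x$j = be$j" "y$j = al$j \<or> y$j = be$j" "z$j = al$j \<or> z$j = be$j"
      using assms is_vertex_nth by blast+
    moreover have "a$j \<le> x$j \<and> x$j \<le> b$j" "a$j \<le> y$j \<and> y$j \<le> b$j" "a$j \<le> z$j \<and> z$j \<le> b$j"
      using assms(5-7) unfolding B mem_box_cart by blast+
    ultimately show "a$j \<le> cube_translate al be x y z $ j \<and> cube_translate al be x y z $ j \<le> b$j"
      by (auto simp: cube_translate_def)
  qed
qed

lemma antipode_antipode: "antipode al be (antipode al be x) = x"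
  unfolding antipode_def by (simp add: vec_eq_iff)

lemma is_vertex_mem_diag_pair: "is_vertex al be x \<Longrightarrow> x' \<in> diag_pair al be x \<Longrightarrow> is_vertex al be x'"
  unfolding diag_pair_def using is_vertex_antipode by blast

lemma diag_pair_eq_of_mem: "x' \<in> diag_pair al be x \<Longrightarrow> diag_pair al be x' = diag_pair al be x"
  unfolding diag_pair_def by (auto simp: antipode_antipode)

lemma cube_translate_mem_diag_pair:
  assumes v: "is_vertex al be x" "is_vertex al be y" "is_vertex al be z"
    and "x' \<in> diag_pair al be x" "y' \<in> diag_pair al be y" "z' \<in> diag_pair al be z"
  shows "cube_translate al be x' y' z' \<in> diag_pair al be (cube_translate al be x y z)"
proof -
  have "cube_translate al be x' y' z \<in> diag_pair al be (cube_translate al be x y z)"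
    using assms(4,5) v
    by (auto simp: diag_pair_def cube_translate_antipode_left cube_translate_antipode_middle
        is_vertex_antipode antipode_antipode)
  then have "diag_pair al be (cube_translate al be x' y' z) = diag_pair al be (cube_translate al be x y z)"
    by (rule diag_pair_eq_of_mem)
  moreover have "cube_translate al be x' y' z' \<in> diag_pair al be (cube_translate al be x' y' z)"
    using assms(6) cube_translate_image_diag_pair[of al be x' y' z] by blast
  ultimately show ?thesis by simp
qed

lemma hits_diag_pair_cube_translate:
  assumes F: "\<forall>B\<in>F. is_box B"
    and v: "is_vertex al be x" "is_vertex al be y" "is_vertex al be z"
    and h: "hits (diag_pair al be x) F" "hits (diag_pair al be y) F" "hits (diag_pair al be z) F"
  shows "hits (diag_pair al be (cube_translate al be x y z)) F"
  unfolding hits_def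
proof
  fix B assume B: "B \<in> F"
  obtain x' y' z' where
    x': "x' \<in> diag_pair al be x" "x' \<in> B" and
    y': "y' \<in> diag_pair al be y" "y' \<in> B" and
    z': "z' \<in> diag_pair al be z" "z' \<in> B"
    using h B unfolding hits_def by meson
  have "cube_translate al be x' y' z' \<in> B"
    using cube_translate_mem_box F B x' y' z' is_vertex_mem_diag_pair v by metis
  moreover have "cube_translate al be x' y' z' \<in> diag_pair al be (cube_translate al be x y z)"
    using cube_translate_mem_diag_pair[OF v x'(1) y'(1) z'(1)] .
  ultimately show "\<exists>p\<in>diag_pair al be (cube_translate al be x y z). p \<in> B" by blast
qed

lemma hits_empty: "hits P {}"
  unfolding hits_def by blast

lemma hits_insert: "hits P (insert B F) \<longleftrightarrow> (\<exists>p\<in>P. p \<in> B) \<and> hits P F"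
  unfolding hits_def by blast

lemma cube_translate_hits_not_hits:
  assumes F: "\<forall>B\<in>F. is_box B" and W: "is_box W"
    and v: "is_vertex al be x" "is_vertex al be y" "is_vertex al be z"
    and x: "hits (diag_pair al be x) F" "\<not> hits (diag_pair al be x) {W}"
    and y: "hits (diag_pair al be y) (insert W F)" and z: "hits (diag_pair al be z) (insert W F)"
  shows "hits (diag_pair al be (cube_translate al be x y z)) F"
    and "\<not> hits (diag_pair al be (cube_translate al be x y z)) {W}"
proof -
  show "hits (diag_pair al be (cube_translate al be x y z)) F"
    using hits_diag_pair_cube_translate[OF F v x(1)] y z by (simp add: hits_insert)
  have y_W: "hits (diag_pair al be y) {W}" and z_W: "hits (diag_pair al be z) {W}"
    using y z by (simp_all add: hits_insert hits_empty)
  have W': "\<forall>B\<in>{W}. is_box B" using W by simp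
  show "\<not> hits (diag_pair al be (cube_translate al be x y z)) {W}"
  proof
    assume "hits (diag_pair al be (cube_translate al be x y z)) {W}"
    from hits_diag_pair_cube_translate[OF W' v(3) is_vertex_cube_translate[OF v(3)] v(2) z_W this y_W]
    show False using x(2) cube_translate_cancel[OF v] by simp
  qed
qed

lemma card_diag_pairs_hitting_insert:
  fixes F :: "(real^'d) set set"
  assumes F: "\<forall>B\<in>F. is_box B" and W: "is_box W"
    and P: "P \<in> diag_pairs al be" "hits P F" "\<not> hits P {W}"
  shows "2 * card {Q\<in>diag_pairs al be. hits Q (insert W F)} \<le> card {Q\<in>diag_pairs al be. hits Q F}"
proof -
  define S where "S = {Q\<in>diag_pairs al be. hits Q F}"
  define T where "T = {Q\<in>diag_pairs al be. hits Q (insert W F)}"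
  have T_S: "T \<subseteq> S" unfolding S_def T_def hits_insert by blast
  have fin_S: "finite S" unfolding S_def using finite_diag_pairs[of al be] by simp
  have "card T \<le> card (S - T)"
  proof (cases "T = {}")
    case False
    then obtain y where y: "is_vertex al be y" "diag_pair al be y \<in> T"
      unfolding T_def diag_pairs_eq_image by blast
    obtain x where x: "is_vertex al be x" "P = diag_pair al be x"
      using P(1) unfolding diag_pairs_eq_image by blast
    let ?f = "cube_translate al be x y"
    have "inj ?f" by (metis cube_translate_involution injI)
    then have "inj_on (image ?f) T" by (simp add: inj_on_def inj_image_eq_iff)
    moreover have "image ?f ` T \<subseteq> S - T"
    proof
      fix R assume "R \<in> image ?f ` T"
      then obtain z where z: "is_vertex al be z" "diag_pair al be z \<in> T"
        and R: "R = diag_pair al be (?f z)"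
        unfolding T_def diag_pairs_eq_image by (auto simp: cube_translate_image_diag_pair)
      have "R \<in> diag_pairs al be"
        unfolding R diag_pairs_eq_image using is_vertex_cube_translate z(1) by blast
      moreover have "hits R F" "\<not> hits R {W}"
        unfolding R using cube_translate_hits_not_hits[OF F W x(1) y(1) z(1)] P(2,3) x(2) y(2) z(2)
        by (simp_all add: T_def)
      ultimately show "R \<in> S - T" by (simp add: S_def T_def hits_insert hits_empty)
    qed
    ultimately show ?thesis by (rule card_inj_on_le) (use fin_S in simp)
  qed simp
  moreover have "card (S - T) = card S - card T"
    using card_Diff_subset[OF finite_subset[OF T_S fin_S] T_S] .
  moreover have "card T \<le> card S" using card_mono[OF fin_S T_S] .
  ultimately show ?thesis unfolding S_def T_def by linarith
qed

lemma colorful_boxes: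
  assumes "colorful G n Cs" "\<forall>i\<in>{1..n}. \<forall>B\<in>G i. is_box B"
  shows "\<forall>B\<in>set Cs. is_box B"
proof
  fix B assume "B \<in> set Cs"
  then obtain m where m: "m < length Cs" "B = Cs!m" by (auto simp: in_set_conv_nth)
  obtain idx where "length idx = length Cs" "set idx \<subseteq> {1..n}" "\<forall>j<length Cs. Cs!j \<in> G (idx!j)"
    using assms(1) unfolding colorful_def by blast
  with m have "idx!m \<in> {1..n}" "B \<in> G (idx!m)" by (metis nth_mem subsetD)+
  with assms(2) show "is_box B" by blast
qed

lemma colorful_snoc:
  assumes "colorful G n Cs" "i \<in> {1..n}" "\<forall>m<length Cs. Cs!m \<notin> G i" "W \<in> G i"
  shows "colorful G n (Cs @ [W])"
proof -
  obtain idx where idx: "length idx = length Cs" "distinct idx" "set idx \<subseteq> {1..n}"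
    "\<forall>j<length Cs. Cs!j \<in> G (idx!j)"
    using assms(1) unfolding colorful_def by blast
  have "i \<notin> set idx"
    using idx(1,4) assms(3) by (metis in_set_conv_nth)
  with idx assms(2,4) show ?thesis
    unfolding colorful_def
    by (intro exI[of _ "idx @ [i]"]) (auto simp: nth_append less_Suc_eq)
qed

theorem lemma5:
  fixes al be :: "real^'d" and G :: "nat \<Rightarrow> (real^'d) set set"
    and n k :: nat and Vs :: "(real^'d) set list"
  assumes V_box: "\<forall>j. al$j \<le> be$j"
    and G_ne: "\<forall>i\<in>{1..n}. G i \<noteq> {}"
    and G_boxes: "\<forall>i\<in>{1..n}. \<forall>B\<in>G i. is_box B"
    and cond_i: "\<forall>i\<in>{1..n}. \<forall>B\<in>G i. \<forall>j. proj j B \<inter> {al$j, be$j} \<noteq> {}"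
    and cond_ii: "\<forall>Cs. colorful G n Cs \<and> length Cs = n \<longrightarrow>
                    (\<exists>P\<in>diag_pairs al be. hits P (set Cs))"
    and r_lt: "length Vs < n"
    and Vs_col: "colorful G n Vs"
    and k_lt: "k < CARD('d)"
    and few: "card {P\<in>diag_pairs al be. hits P (set Vs)} \<le> 2 ^ k"
  shows "(\<forall>P\<in>diag_pairs al be. hits P (set Vs) \<longrightarrow>
            (\<forall>i\<in>{1..n}. (\<forall>m<length Vs. Vs!m \<notin> G i) \<longrightarrow> hits P (G i)))
       \<or> (\<exists>i\<in>{1..n}. \<exists>W\<in>G i. colorful G n (Vs @ [W]) \<and>
            real (card {P\<in>diag_pairs al be. hits P (set (Vs @ [W]))}) \<le> (2::real) powi (int k - 1))"
    (is "?option1 \<or> ?option2")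
proof (cases ?option1)
  case False
  then obtain P i W where P: "P \<in> diag_pairs al be" "hits P (set Vs)"
    and i: "i \<in> {1..n}" "\<forall>m<length Vs. Vs!m \<notin> G i"
    and W: "W \<in> G i" "\<not> hits P {W}"
    unfolding hits_def by blast
  have "2 * card {P\<in>diag_pairs al be. hits P (set (Vs @ [W]))} \<le> 2 ^ k"
    using card_diag_pairs_hitting_insert[OF colorful_boxes[OF Vs_col G_boxes] _ P W(2)]
      G_boxes i(1) W(1) few by simp
  then have "real (2 * card {P\<in>diag_pairs al be. hits P (set (Vs @ [W]))}) \<le> real (2 ^ k)"
    by (simp only: of_nat_le_iff)
  then have "real (card {P\<in>diag_pairs al be. hits P (set (Vs @ [W]))}) \<le> 2 ^ k / 2"
    by simp
  also have "\<dots> = (2::real) powi (int k - 1)" by (simp add: power_int_diff)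
  finally show ?thesis using colorful_snoc[OF Vs_col i W(1)] i(1) W(1) by blast
qed blast

end
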